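(* Let $d\ge2$ and $n\ge2$. There is no polynomial $\varphi$ in the coefficients of $f\in\mathbb R[x]_d$ with $\varphi(f)>0$ for all $f$ in the interior of $\mathcal C_{n,d}$ and $\varphi(f)=0$ for all $f$ on the boundary of $\mathcal C_{n,d}$. Consequently $-\log\varphi(f)$ cannot be a barrier for $\mathcal C_{n,d}$ with $\varphi$ polynomial, and $\mathcal C_{n,d}$ is not representable by a linear matrix inequality (no symmetric matrix pencil $L(f)$ linear in the coefficients of $f$ with $\mathcal C_{n,d}=\{f:L(f)\succeq0\}$ and $L(f)\succ0$ on the interior).
   Context: $x=(x_1,\dots,x_n)$; $\mathbb R[x]_d$ is the space of real forms of degree $d$ with the Euclidean topology on coefficients. $\mathcal C_{n,d}=\{f\in\mathbb R[x]_d: f(x)\ge0\ \forall x\in\mathbb R^n_+\}$ is the cone of copositive forms. *)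

theory Defs
  imports "HOL-Analysis.Analysis"
begin

definition mono_exps :: "nat \<Rightarrow> nat \<Rightarrow> (nat \<Rightarrow> nat) set" where
  "mono_exps n d = {\<alpha>. (\<forall>i. n \<le> i \<longrightarrow> \<alpha> i = 0) \<and> (\<Sum>i<n. \<alpha> i) = d}"

text \<open>R[x]_d: a form is given by its coefficient vector, supported on mono_exps n d.\<close>
definition forms :: "nat \<Rightarrow> nat \<Rightarrow> ((nat \<Rightarrow> nat) \<Rightarrow> real) set" where
  "forms n d = {c. \<forall>\<alpha>. \<alpha> \<notin> mono_exps n d \<longrightarrow> c \<alpha> = 0}"

definition eval_form :: "nat \<Rightarrow> nat \<Rightarrow> ((nat \<Rightarrow> nat) \<Rightarrow> real) \<Rightarrow> (nat \<Rightarrow> real) \<Rightarrow> real" where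
  "eval_form n d c x = (\<Sum>\<alpha>\<in>mono_exps n d. c \<alpha> * (\<Prod>i<n. x i ^ \<alpha> i))"

definition copos :: "nat \<Rightarrow> nat \<Rightarrow> ((nat \<Rightarrow> nat) \<Rightarrow> real) set" where
  "copos n d = {c \<in> forms n d. \<forall>x. (\<forall>i<n. 0 \<le> x i) \<longrightarrow> 0 \<le> eval_form n d c x}"

text \<open>Euclidean topology on coefficients (via the equivalent max-norm neighbourhoods).\<close>
definition coef_near :: "nat \<Rightarrow> nat \<Rightarrow> real \<Rightarrow> ((nat \<Rightarrow> nat) \<Rightarrow> real) \<Rightarrow> ((nat \<Rightarrow> nat) \<Rightarrow> real) \<Rightarrow> bool" where
  "coef_near n d \<epsilon> c c' \<longleftrightarrow> (\<forall>\<alpha>\<in>mono_exps n d. \<bar>c \<alpha> - c' \<alpha>\<bar> < \<epsilon>)"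

definition form_interior :: "nat \<Rightarrow> nat \<Rightarrow> ((nat \<Rightarrow> nat) \<Rightarrow> real) set \<Rightarrow> ((nat \<Rightarrow> nat) \<Rightarrow> real) set" where
  "form_interior n d S = {c \<in> S. \<exists>\<epsilon>>0. \<forall>c'\<in>forms n d. coef_near n d \<epsilon> c c' \<longrightarrow> c' \<in> S}"

definition form_closure :: "nat \<Rightarrow> nat \<Rightarrow> ((nat \<Rightarrow> nat) \<Rightarrow> real) set \<Rightarrow> ((nat \<Rightarrow> nat) \<Rightarrow> real) set" where
  "form_closure n d S = {c \<in> forms n d. \<forall>\<epsilon>>0. \<exists>c'\<in>S. coef_near n d \<epsilon> c c'}"

definition form_boundary :: "nat \<Rightarrow> nat \<Rightarrow> ((nat \<Rightarrow> nat) \<Rightarrow> real) set \<Rightarrow> ((nat \<Rightarrow> nat) \<Rightarrow> real) set" where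
  "form_boundary n d S = form_closure n d S - form_interior n d S"

definition poly_in_coeffs :: "nat \<Rightarrow> nat \<Rightarrow> (((nat \<Rightarrow> nat) \<Rightarrow> real) \<Rightarrow> real) \<Rightarrow> bool" where
  "poly_in_coeffs n d \<phi> \<longleftrightarrow>
     (\<exists>B a. finite (B :: ((nat \<Rightarrow> nat) \<Rightarrow> nat) set) \<and>
        (\<forall>c. \<phi> c = (\<Sum>\<beta>\<in>B. a \<beta> * (\<Prod>\<alpha>\<in>mono_exps n d. c \<alpha> ^ \<beta> \<alpha>))))"

definition psd :: "real^'m^'m \<Rightarrow> bool" where
  "psd M \<longleftrightarrow> transpose M = M \<and> (\<forall>v. 0 \<le> v \<bullet> (M *v v))"

definition pd :: "real^'m^'m \<Rightarrow> bool" where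
  "pd M \<longleftrightarrow> transpose M = M \<and> (\<forall>v. v \<noteq> 0 \<longrightarrow> 0 < v \<bullet> (M *v v))"

definition sym_pencil :: "nat \<Rightarrow> nat \<Rightarrow> (((nat \<Rightarrow> nat) \<Rightarrow> real) \<Rightarrow> real^'m^'m) \<Rightarrow> bool" where
  "sym_pencil n d L \<longleftrightarrow>
     (\<exists>A0 A. transpose A0 = A0 \<and> (\<forall>\<alpha>. transpose (A \<alpha>) = A \<alpha>) \<and>
        (\<forall>c. L c = A0 + (\<Sum>\<alpha>\<in>mono_exps n d. c \<alpha> *\<^sub>R A \<alpha>)))"

end

theory Submission
  imports Defs "HOL-Computational_Algebra.Polynomial"
begin

(* Consider the one-parameter family of forms
     f_s = (s x_0 + x_1)^2 (x_0^(d-2) + x_1^(d-2)) + x_2^d + ... + x_(n-1)^d,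
   whose coefficients are polynomials of degree <= 2 in s.  Every f_s is copositive;
   f_1 dominates x_0^d + ... + x_(n-1)^d and hence lies in the interior, while for s < 0
   the form f_s vanishes at the nonnegative point (1, -s, 0, ..., 0), so subtracting any
   positive multiple of x_0^d destroys copositivity and f_s lies on the boundary.
   If phi were a polynomial defining function, s |-> phi(f_s) would be a univariate
   polynomial vanishing on all s < 0, hence identically zero, contradicting phi(f_1) > 0.
   For an LMI representation L, the same applies to s |-> det L(f_s): at a boundary point
   with nonsingular L(f), L(f) would be positive definite, a small perturbation of f would
   stay in the cone, which is impossible at the "rigid" points f_s, s < 0.
   The file develops (1) facts on psd/pd matrices, (2) polynomial dependence of phi and
   det L along polynomial curves, (3) monomial bookkeeping and two criteria for interior
   and boundary points of the copositive cone, (4) the family f_s, and (5) the theorem. *)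


section \<open>Positive semidefinite and positive definite matrices\<close>

lemma quad_form_scaleR:
  fixes N :: "real^'m^'m"
  shows "(c *\<^sub>R u) \<bullet> (N *v (c *\<^sub>R u)) = c * c * (u \<bullet> (N *v u))"
  by (simp add: matrix_vector_mult_scaleR)

text \<open>A positive definite quadratic form stays positive semidefinite under a small
  perturbation in any direction B: its minimum on the unit sphere is positive.\<close>
lemma pd_perturbation_psd:
  fixes M B :: "real^'m^'m"
  assumes pos: "\<forall>v. v \<noteq> 0 \<longrightarrow> 0 < v \<bullet> (M *v v)"
  shows "\<exists>e>0. \<forall>v. 0 \<le> v \<bullet> ((M - e *\<^sub>R B) *v v)"
proof -
  define S where "S = sphere (0::real^'m) 1"
  have cS: "compact S" and neS: "S \<noteq> {}" unfolding S_def by simp_all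
  have "continuous_on S (\<lambda>v. v \<bullet> (M *v v))" by (intro continuous_intros)
  then obtain v0 where v0: "v0 \<in> S" "\<forall>v\<in>S. v0 \<bullet> (M *v v0) \<le> v \<bullet> (M *v v)"
    using continuous_attains_inf[OF cS neS] by blast
  define \<delta> where "\<delta> = v0 \<bullet> (M *v v0)"
  have "v0 \<noteq> 0" using v0(1) unfolding S_def by auto
  then have \<delta>_pos: "\<delta> > 0" using pos unfolding \<delta>_def by auto
  have "continuous_on S (\<lambda>v. v \<bullet> (B *v v))" by (intro continuous_intros)
  then have "bounded ((\<lambda>v. v \<bullet> (B *v v)) ` S)"
    by (rule compact_imp_bounded[OF compact_continuous_image[OF _ cS]])
  then obtain K where K: "K > 0" "\<forall>y\<in>(\<lambda>v. v \<bullet> (B *v v)) ` S. norm y \<le> K"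
    using bounded_pos by blast
  define e where "e = \<delta> / K"
  have e_pos: "e > 0" using \<delta>_pos K unfolding e_def by simp
  have on_sphere: "0 \<le> u \<bullet> ((M - e *\<^sub>R B) *v u)" if "u \<in> S" for u
  proof -
    have "\<bar>u \<bullet> (B *v u)\<bar> \<le> K" using K that by auto
    then have "e * (u \<bullet> (B *v u)) \<le> e * K"
      using e_pos by (meson abs_le_D1 mult_left_mono order_less_imp_le)
    also have "e * K = \<delta>" unfolding e_def using K by simp
    also have "\<delta> \<le> u \<bullet> (M *v u)" using v0 that unfolding \<delta>_def by auto
    finally have "e * (u \<bullet> (B *v u)) \<le> u \<bullet> (M *v u)" .
    moreover have "u \<bullet> ((M - e *\<^sub>R B) *v u) = u \<bullet> (M *v u) - e * (u \<bullet> (B *v u))"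
      by (simp add: matrix_vector_mult_diff_rdistrib inner_diff_right
            scaleR_matrix_vector_assoc[symmetric])
    ultimately show ?thesis by simp
  qed
  have "0 \<le> v \<bullet> ((M - e *\<^sub>R B) *v v)" for v
  proof (cases "v = 0")
    case False
    define u where "u = (1 / norm v) *\<^sub>R v"
    have "u \<in> S" unfolding u_def S_def using False by (simp add: norm_scaleR)
    moreover have "v = norm v *\<^sub>R u" unfolding u_def using False by simp
    then have "v \<bullet> ((M - e *\<^sub>R B) *v v) = norm v * norm v * (u \<bullet> ((M - e *\<^sub>R B) *v u))"
      by (metis quad_form_scaleR)
    ultimately show ?thesis using on_sphere by simp
  qed simp
  then show ?thesis using e_pos by blast
qed

text \<open>A vector on which a psd form vanishes lies in the kernel: otherwise moving from v
  in the direction M v makes the form negative.\<close>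
lemma psd_quad_zero_imp_kernel:
  fixes M :: "real^'m^'m"
  assumes "psd M" "v \<bullet> (M *v v) = 0"
  shows "M *v v = 0"
proof -
  have sym: "transpose M = M" and nonneg: "\<forall>w. 0 \<le> w \<bullet> (M *v w)"
    using assms(1) unfolding psd_def by auto
  have symq: "x \<bullet> (M *v y) = y \<bullet> (M *v x)" for x y
    by (metis dot_lmul_matrix inner_commute sym transpose_matrix_vector)
  define w where "w = M *v v"
  define a where "a = w \<bullet> (M *v v)"
  define b where "b = w \<bullet> (M *v w)"
  have b_nonneg: "b \<ge> 0" using nonneg unfolding b_def by auto
  have expand: "(v + t *\<^sub>R w) \<bullet> (M *v (v + t *\<^sub>R w)) = 2 * t * a + t * t * b" for t
    using assms(2) symq[of v w]
    by (simp add: a_def b_def matrix_vector_right_distrib matrix_vector_mult_scaleR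
        inner_add_left inner_add_right algebra_simps)
  have "a = 0"
  proof (rule ccontr)
    assume "a \<noteq> 0"
    define t where "t = - a / (b + 1)"
    have "2 * t * a + t * t * b = a * a * (- b - 2) / ((b + 1) * (b + 1))"
      using b_nonneg unfolding t_def by (simp add: divide_simps) algebra
    also have "\<dots> < 0"
      using \<open>a \<noteq> 0\<close> b_nonneg by (intro divide_neg_pos mult_pos_neg) (auto simp: zero_less_mult_iff)
    finally show False using nonneg expand[of t] by (metis not_less)
  qed
  then show ?thesis unfolding a_def w_def by simp
qed

lemma det_nonzero_iff_trivial_kernel:
  fixes M :: "real^'m^'m"
  shows "det M \<noteq> 0 \<longleftrightarrow> (\<forall>x. M *v x = 0 \<longrightarrow> x = 0)"
  by (metis invertible_det_nz invertible_left_inverse matrix_left_invertible_ker)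

lemma psd_nonsingular_imp_pd:
  fixes M :: "real^'m^'m"
  assumes "psd M" "det M \<noteq> 0" "v \<noteq> 0"
  shows "0 < v \<bullet> (M *v v)"
proof -
  have "0 \<le> v \<bullet> (M *v v)" using assms(1) unfolding psd_def by auto
  moreover have "v \<bullet> (M *v v) \<noteq> 0"
    using psd_quad_zero_imp_kernel[OF assms(1)] assms(2,3) det_nonzero_iff_trivial_kernel by blast
  ultimately show ?thesis by simp
qed

lemma pd_imp_nonsingular:
  fixes M :: "real^'m^'m"
  assumes "pd M" shows "det M \<noteq> 0"
  using assms unfolding pd_def det_nonzero_iff_trivial_kernel by (metis inner_zero_right less_irrefl)


section \<open>Polynomial dependence along polynomial curves\<close>

lemma poly_vanishing_on_negatives:
  assumes "\<forall>s<0. poly (Q::real poly) s = 0"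
  shows "Q = 0"
proof (rule ccontr)
  assume "Q \<noteq> 0"
  have "{..<0::real} \<subseteq> {x. poly Q x = 0}" using assms by auto
  then have "finite {..<0::real}" using poly_roots_finite[OF \<open>Q \<noteq> 0\<close>] finite_subset by blast
  then show False using infinite_Iio by blast
qed

lemma poly_in_coeffs_along_curve:
  assumes "poly_in_coeffs n d \<phi>" "\<And>s \<alpha>. c s \<alpha> = poly (P \<alpha>) s"
  shows "\<exists>Q. \<forall>s. \<phi> (c s) = poly Q s"
proof -
  obtain B a where \<phi>: "\<And>c. \<phi> c = (\<Sum>\<beta>\<in>B. a \<beta> * (\<Prod>\<alpha>\<in>mono_exps n d. c \<alpha> ^ \<beta> \<alpha>))"
    using assms(1) unfolding poly_in_coeffs_def by blast
  define Q where "Q = (\<Sum>\<beta>\<in>B. [:a \<beta>:] * (\<Prod>\<alpha>\<in>mono_exps n d. P \<alpha> ^ \<beta> \<alpha>))"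
  have "\<phi> (c s) = poly Q s" for s
    unfolding Q_def \<phi> by (simp add: poly_sum poly_prod assms(2))
  then show ?thesis by blast
qed

lemma det_polynomial_entries:
  fixes M :: "real \<Rightarrow> real^'m^'m"
  assumes "\<And>s i j. M s $ i $ j = poly (P i j) s"
  shows "\<exists>Q. \<forall>s. det (M s) = poly Q s"
proof -
  define Q where "Q = (\<Sum>p\<in>{p. p permutes (UNIV::'m set)}.
                          [:of_int (sign p):] * (\<Prod>i\<in>UNIV. P i (p i)))"
  have "det (M s) = poly Q s" for s
    unfolding Q_def det_def by (simp add: poly_sum poly_prod assms)
  then show ?thesis by blast
qed

lemma pencil_along_curve:
  fixes L :: "((nat \<Rightarrow> nat) \<Rightarrow> real) \<Rightarrow> real^'m^'m"
  assumes "sym_pencil n d L" "\<And>s \<alpha>. c s \<alpha> = poly (P \<alpha>) s"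
  shows "\<exists>Q. \<forall>s. det (L (c s)) = poly Q s"
proof -
  obtain A0 A where L: "\<And>c. L c = A0 + (\<Sum>\<alpha>\<in>mono_exps n d. c \<alpha> *\<^sub>R A \<alpha>)"
    using assms(1) unfolding sym_pencil_def by blast
  define Pe where "Pe = (\<lambda>i j. [:A0$i$j:] + (\<Sum>\<alpha>\<in>mono_exps n d. smult (A \<alpha> $ i $ j) (P \<alpha>)))"
  have "L (c s) $ i $ j = poly (Pe i j) s" for s i j
    unfolding L Pe_def by (simp add: poly_sum assms(2) sum_component mult.commute)
  then show ?thesis by (rule det_polynomial_entries)
qed


definition mon :: "(nat \<Rightarrow> nat) \<Rightarrow> (nat \<Rightarrow> nat) \<Rightarrow> real" where
  "mon \<beta> \<alpha> = (if \<alpha> = \<beta> then 1 else 0)"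

definition xp :: "nat \<Rightarrow> (nat \<Rightarrow> nat) \<Rightarrow> (nat \<Rightarrow> real) \<Rightarrow> real" where
  "xp n \<alpha> x = (\<Prod>i<n. x i ^ \<alpha> i)"

definition ex2 :: "nat \<Rightarrow> nat \<Rightarrow> nat \<Rightarrow> nat" where
  "ex2 a b = (\<lambda>i. if i = 0 then a else if i = 1 then b else 0)"

definition exi :: "nat \<Rightarrow> nat \<Rightarrow> nat \<Rightarrow> nat" where
  "exi d k = (\<lambda>j. if j = k then d else 0)"

lemma finite_mono_exps: "finite (mono_exps n d)"
proof -
  have "mono_exps n d \<subseteq> (\<lambda>g i. if i < n then g i else 0) ` ({..<n} \<rightarrow>\<^sub>E {..d})"
  proof
    fix \<alpha> assume "\<alpha> \<in> mono_exps n d"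
    then have zero: "\<forall>i. n \<le> i \<longrightarrow> \<alpha> i = 0" and sum: "(\<Sum>i<n. \<alpha> i) = d"
      unfolding mono_exps_def by auto
    have "\<alpha> i \<le> d" if "i < n" for i
      using sum that member_le_sum[of i "{..<n}" \<alpha>] by auto
    then have "restrict \<alpha> {..<n} \<in> {..<n} \<rightarrow>\<^sub>E {..d}" by auto
    moreover have "\<alpha> = (\<lambda>i. if i < n then restrict \<alpha> {..<n} i else 0)"
      using zero by (auto simp: fun_eq_iff not_less)
    ultimately show "\<alpha> \<in> (\<lambda>g i. if i < n then g i else 0) ` ({..<n} \<rightarrow>\<^sub>E {..d})" by blast
  qed
  moreover have "finite ({..<n} \<rightarrow>\<^sub>E {..d})" by (intro finite_PiE) auto
  ultimately show ?thesis using finite_surj by blast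
qed

lemma ex2_mem: "2 \<le> n \<Longrightarrow> a + b = d \<Longrightarrow> ex2 a b \<in> mono_exps n d"
proof -
  assume n: "2 \<le> n" and ab: "a + b = d"
  have e: "ex2 a b i = (if i = 0 then a else 0) + (if i = 1 then b else 0)" for i
    unfolding ex2_def by auto
  have "(\<Sum>i<n. ex2 a b i) = a + b"
    unfolding e sum.distrib using n by (simp add: sum.delta)
  then show ?thesis unfolding mono_exps_def ex2_def using n ab by auto
qed

lemma exi_mem: "k < n \<Longrightarrow> exi d k \<in> mono_exps n d"
  unfolding mono_exps_def exi_def by (auto simp: sum.delta)

lemma xp_ex2: "2 \<le> n \<Longrightarrow> xp n (ex2 a b) x = x 0 ^ a * x 1 ^ b"
proof -
  assume n: "2 \<le> n"
  have e: "x i ^ ex2 a b i = (if i = 0 then x 0 ^ a else 1) * (if i = 1 then x 1 ^ b else 1)" for i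
    unfolding ex2_def by auto
  show ?thesis unfolding xp_def e prod.distrib using n by (simp add: prod.delta)
qed

lemma xp_exi: "k < n \<Longrightarrow> xp n (exi d k) x = x k ^ d"
proof -
  assume n: "k < n"
  have e: "x i ^ exi d k i = (if i = k then x k ^ d else 1)" for i
    unfolding exi_def by auto
  show ?thesis unfolding xp_def e using n by (simp add: prod.delta)
qed

lemma mon_outside: "\<beta> \<in> mono_exps n d \<Longrightarrow> \<alpha> \<notin> mono_exps n d \<Longrightarrow> mon \<beta> \<alpha> = 0"
  unfolding mon_def by auto

lemma forms_minus_mon:
  "c \<in> forms n d \<Longrightarrow> \<beta> \<in> mono_exps n d \<Longrightarrow> (\<lambda>\<alpha>. c \<alpha> - e * mon \<beta> \<alpha>) \<in> forms n d"
  unfolding forms_def by (auto simp: mon_outside)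

lemma eval_xp: "eval_form n d c x = (\<Sum>\<alpha>\<in>mono_exps n d. c \<alpha> * xp n \<alpha> x)"
  unfolding eval_form_def xp_def ..

lemma eval_add: "eval_form n d (\<lambda>\<alpha>. c1 \<alpha> + c2 \<alpha>) x = eval_form n d c1 x + eval_form n d c2 x"
  unfolding eval_form_def by (simp add: distrib_right sum.distrib)

lemma eval_diff: "eval_form n d (\<lambda>\<alpha>. c1 \<alpha> - c2 \<alpha>) x = eval_form n d c1 x - eval_form n d c2 x"
  unfolding eval_form_def by (simp add: left_diff_distrib sum_subtractf)

lemma eval_scale: "eval_form n d (\<lambda>\<alpha>. k * c \<alpha>) x = k * eval_form n d c x"
  unfolding eval_form_def by (simp add: sum_distrib_left mult.assoc)

lemma eval_sum: "eval_form n d (\<lambda>\<alpha>. \<Sum>i\<in>I. c i \<alpha>) x = (\<Sum>i\<in>I. eval_form n d (c i) x)"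
  unfolding eval_form_def by (simp add: sum_distrib_right sum.swap[of _ I])

lemma eval_mon: "\<beta> \<in> mono_exps n d \<Longrightarrow> eval_form n d (mon \<beta>) x = xp n \<beta> x"
proof -
  assume "\<beta> \<in> mono_exps n d"
  moreover have single: "(\<lambda>\<alpha>. mon \<beta> \<alpha> * xp n \<alpha> x) = (\<lambda>\<alpha>. if \<alpha> = \<beta> then xp n \<beta> x else 0)"
    unfolding mon_def by auto
  ultimately show ?thesis unfolding eval_xp single using finite_mono_exps by (simp add: sum.delta')
qed

lemma xp_le_power_sum:
  assumes "\<alpha> \<in> mono_exps n d" "\<forall>i<n. 0 \<le> x i" "1 \<le> n"
  shows "xp n \<alpha> x \<le> (\<Sum>i<n. x i ^ d)"
proof -
  define m where "m = Max (x ` {..<n})"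
  have "m \<in> x ` {..<n}" unfolding m_def using assms(3) by (intro Max_in) (auto simp: lessThan_empty_iff)
  then obtain j where j: "j < n" "m = x j" by auto
  have "xp n \<alpha> x \<le> (\<Prod>i<n. m ^ \<alpha> i)"
    unfolding xp_def m_def using assms(2) by (intro prod_mono) (auto intro: power_mono)
  also have "\<dots> = m ^ (\<Sum>i<n. \<alpha> i)" by (simp add: power_sum)
  also have "\<dots> = m ^ d" using assms(1) unfolding mono_exps_def by auto
  also have "\<dots> \<le> (\<Sum>i<n. x i ^ d)" unfolding j(2)
    using j(1) assms(2) by (intro member_le_sum) auto
  finally show ?thesis .
qed


section \<open>Interior and boundary points of the copositive cone\<close>

text \<open>A form dominating x_0^d + ... + x_(n-1)^d on the orthant is an interior point: a
  coefficient perturbation of size < 1/(N+1), N the number of monomials, changes the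
  value by less than the power sum.\<close>
lemma dominating_power_sum_interior:
  assumes "1 \<le> n" "f \<in> forms n d" "\<And>x. \<forall>i<n. 0 \<le> x i \<Longrightarrow> (\<Sum>i<n. x i ^ d) \<le> eval_form n d f x"
  shows "f \<in> form_interior n d (copos n d)"
proof -
  define N where "N = card (mono_exps n d)"
  define \<epsilon> :: real where "\<epsilon> = 1 / (N + 1)"
  have \<epsilon>_pos: "\<epsilon> > 0" unfolding \<epsilon>_def by simp
  have nonneg: "0 \<le> eval_form n d c x"
    if near: "coef_near n d \<epsilon> f c" and x: "\<forall>i<n. 0 \<le> x i" for c x
  proof -
    define T where "T = (\<Sum>i<n. x i ^ d)"
    have T_nonneg: "0 \<le> T" unfolding T_def using x by (auto intro: sum_nonneg)
    have "(\<Sum>\<alpha>\<in>mono_exps n d. - (\<epsilon> * T)) \<le> (\<Sum>\<alpha>\<in>mono_exps n d. (c \<alpha> - f \<alpha>) * xp n \<alpha> x)"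
    proof (intro sum_mono)
      fix \<alpha> assume \<alpha>: "\<alpha> \<in> mono_exps n d"
      have "0 \<le> xp n \<alpha> x" unfolding xp_def using x by (auto intro: prod_nonneg)
      moreover have "xp n \<alpha> x \<le> T" unfolding T_def using xp_le_power_sum[OF \<alpha> x assms(1)] .
      moreover have "- \<epsilon> \<le> c \<alpha> - f \<alpha>" using near \<alpha> unfolding coef_near_def by force
      ultimately show "- (\<epsilon> * T) \<le> (c \<alpha> - f \<alpha>) * xp n \<alpha> x"
        using \<epsilon>_pos by (smt (verit) mult_le_cancel_left mult_minus_left mult_right_mono)
    qed
    also have "\<dots> = eval_form n d c x - eval_form n d f x"
      unfolding eval_xp by (simp add: sum_subtractf left_diff_distrib)
    finally have "eval_form n d f x - N * (\<epsilon> * T) \<le> eval_form n d c x"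
      unfolding N_def by simp
    moreover have "N * \<epsilon> \<le> 1" unfolding \<epsilon>_def by (simp add: divide_simps)
    then have "N * (\<epsilon> * T) \<le> T" using T_nonneg mult_right_mono[of "N * \<epsilon>" 1 T] by (simp add: mult.assoc)
    ultimately show ?thesis using assms(3)[OF x] unfolding T_def by simp
  qed
  have "0 \<le> eval_form n d f x" if "\<forall>i<n. 0 \<le> x i" for x
    using assms(3)[OF that] sum_nonneg[of "{..<n}" "\<lambda>i. x i ^ d"] that by force
  then have "f \<in> copos n d" unfolding copos_def using assms(2) by auto
  then show ?thesis
    unfolding form_interior_def copos_def using \<epsilon>_pos nonneg by auto
qed

lemma zero_in_orthant_rigid:
  assumes "\<beta> \<in> mono_exps n d" "\<forall>i<n. 0 \<le> x i" "eval_form n d f x = 0" "0 < xp n \<beta> x" "e > 0"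
  shows "(\<lambda>\<alpha>. f \<alpha> - e * mon \<beta> \<alpha>) \<notin> copos n d"
proof
  assume "(\<lambda>\<alpha>. f \<alpha> - e * mon \<beta> \<alpha>) \<in> copos n d"
  then have "0 \<le> eval_form n d (\<lambda>\<alpha>. f \<alpha> - e * mon \<beta> \<alpha>) x"
    using assms(2) unfolding copos_def by blast
  also have "\<dots> = - e * xp n \<beta> x"
    using assms(1,3) by (simp add: eval_diff eval_scale eval_mon)
  finally show False using mult_pos_pos[OF assms(5,4)] by simp
qed

lemma rigid_imp_boundary:
  assumes "f \<in> copos n d" "\<beta> \<in> mono_exps n d"
    and rigid: "\<And>e. e > 0 \<Longrightarrow> (\<lambda>\<alpha>. f \<alpha> - e * mon \<beta> \<alpha>) \<notin> copos n d"
  shows "f \<in> form_boundary n d (copos n d)"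
proof -
  have f_forms: "f \<in> forms n d" using assms(1) unfolding copos_def by auto
  have "f \<in> form_closure n d (copos n d)"
    unfolding form_closure_def coef_near_def using assms(1) f_forms by (auto intro!: bexI[of _ f])
  moreover have "f \<notin> form_interior n d (copos n d)"
  proof
    assume "f \<in> form_interior n d (copos n d)"
    then obtain \<epsilon> where \<epsilon>: "\<epsilon> > 0"
      and near: "\<forall>c\<in>forms n d. coef_near n d \<epsilon> f c \<longrightarrow> c \<in> copos n d"
      unfolding form_interior_def by auto
    have "coef_near n d \<epsilon> f (\<lambda>\<alpha>. f \<alpha> - \<epsilon>/2 * mon \<beta> \<alpha>)"
      unfolding coef_near_def mon_def using \<epsilon> by auto
    then have "(\<lambda>\<alpha>. f \<alpha> - \<epsilon>/2 * mon \<beta> \<alpha>) \<in> copos n d"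
      using near forms_minus_mon[OF f_forms assms(2)] by blast
    then show False using rigid[of "\<epsilon>/2"] \<epsilon> by simp
  qed
  ultimately show ?thesis unfolding form_boundary_def by auto
qed

text \<open>For an LMI representation, L(f) is singular at every rigid point f of the cone:
  were it nonsingular, it would be positive definite and L(f - e x^\<beta>) = L(f) - e A_\<beta>
  would stay psd for small e.\<close>
lemma lmi_singular_at_rigid:
  fixes L :: "((nat \<Rightarrow> nat) \<Rightarrow> real) \<Rightarrow> real^'m^'m"
  assumes pencil: "sym_pencil n d L" and rep: "copos n d = {f \<in> forms n d. psd (L f)}"
    and "f \<in> copos n d" "\<beta> \<in> mono_exps n d"
    and rigid: "\<And>e. e > 0 \<Longrightarrow> (\<lambda>\<alpha>. f \<alpha> - e * mon \<beta> \<alpha>) \<notin> copos n d"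
  shows "det (L f) = 0"
proof (rule ccontr)
  assume nonsingular: "det (L f) \<noteq> 0"
  obtain A0 A where sym: "\<forall>\<alpha>. transpose (A \<alpha>) = A \<alpha>"
    and L: "\<And>c. L c = A0 + (\<Sum>\<alpha>\<in>mono_exps n d. c \<alpha> *\<^sub>R A \<alpha>)"
    using pencil unfolding sym_pencil_def by blast
  have psd: "psd (L f)" and f_forms: "f \<in> forms n d" using assms(3) rep by auto
  then obtain e where e: "e > 0" "\<forall>v. 0 \<le> v \<bullet> ((L f - e *\<^sub>R A \<beta>) *v v)"
    using pd_perturbation_psd psd_nonsingular_imp_pd[OF psd nonsingular] by blast
  define g where "g = (\<lambda>\<alpha>. f \<alpha> - e * mon \<beta> \<alpha>)"
  have single: "(\<lambda>\<alpha>. mon \<beta> \<alpha> *\<^sub>R A \<alpha>) = (\<lambda>\<alpha>. if \<alpha> = \<beta> then A \<beta> else 0)"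
    unfolding mon_def by auto
  have mon_sum: "(\<Sum>\<alpha>\<in>mono_exps n d. mon \<beta> \<alpha> *\<^sub>R A \<alpha>) = A \<beta>"
    unfolding single using finite_mono_exps assms(4) by (simp add: sum.delta')
  have Lg: "L g = L f - e *\<^sub>R A \<beta>"
    unfolding L g_def mon_sum[symmetric]
    by (simp add: scaleR_left_diff_distrib sum_subtractf scaleR_sum_right)
  have "transpose (L g) = L g"
    using psd sym unfolding Lg psd_def by (simp add: transpose_def vec_eq_iff)
  then have "psd (L g)" unfolding psd_def using e(2) Lg by simp
  then have "g \<in> copos n d" using rep forms_minus_mon[OF f_forms assms(4)] unfolding g_def by auto
  then show False using rigid[OF e(1)] unfolding g_def by simp
qed


section \<open>The test family\<close>

text \<open>Coefficients of s^2, s^1, s^0 in the family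
  f_s = (s x_0 + x_1)^2 (x_0^(d-2) + x_1^(d-2)) + x_2^d + ... + x_(n-1)^d.\<close>
definition fam_quad :: "nat \<Rightarrow> (nat \<Rightarrow> nat) \<Rightarrow> real" where
  "fam_quad d = (\<lambda>\<alpha>. mon (ex2 d 0) \<alpha> + mon (ex2 2 (d-2)) \<alpha>)"

definition fam_lin :: "nat \<Rightarrow> (nat \<Rightarrow> nat) \<Rightarrow> real" where
  "fam_lin d = (\<lambda>\<alpha>. 2 * mon (ex2 (d-1) 1) \<alpha> + 2 * mon (ex2 1 (d-1)) \<alpha>)"

definition fam_const :: "nat \<Rightarrow> nat \<Rightarrow> (nat \<Rightarrow> nat) \<Rightarrow> real" where
  "fam_const n d = (\<lambda>\<alpha>. mon (ex2 (d-2) 2) \<alpha> + mon (ex2 0 d) \<alpha> + (\<Sum>k\<in>{2..<n}. mon (exi d k) \<alpha>))"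

definition fam :: "nat \<Rightarrow> nat \<Rightarrow> real \<Rightarrow> (nat \<Rightarrow> nat) \<Rightarrow> real" where
  "fam n d s = (\<lambda>\<alpha>. s^2 * fam_quad d \<alpha> + s * fam_lin d \<alpha> + fam_const n d \<alpha>)"

definition fam_coeff_poly :: "nat \<Rightarrow> nat \<Rightarrow> (nat \<Rightarrow> nat) \<Rightarrow> real poly" where
  "fam_coeff_poly n d \<alpha> = [:fam_const n d \<alpha>, fam_lin d \<alpha>, fam_quad d \<alpha>:]"

lemma fam_poly: "fam n d s \<alpha> = poly (fam_coeff_poly n d \<alpha>) s"
  unfolding fam_def fam_coeff_poly_def by (simp add: power2_eq_square algebra_simps)

lemma fam_exps:
  assumes "2 \<le> n" "2 \<le> d"
  shows "ex2 d 0 \<in> mono_exps n d" "ex2 2 (d-2) \<in> mono_exps n d"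
     "ex2 (d-1) 1 \<in> mono_exps n d" "ex2 1 (d-1) \<in> mono_exps n d"
     "ex2 (d-2) 2 \<in> mono_exps n d" "ex2 0 d \<in> mono_exps n d"
  using assms by (auto intro!: ex2_mem)

lemma fam_forms:
  assumes "2 \<le> n" "2 \<le> d"
  shows "fam n d s \<in> forms n d"
proof -
  have "(\<Sum>k = 2..<n. mon (exi d k) \<alpha>) = 0" if "\<alpha> \<notin> mono_exps n d" for \<alpha>
    using that mon_outside[OF exi_mem] by (auto intro!: sum.neutral)
  then show ?thesis
    unfolding forms_def fam_def fam_quad_def fam_lin_def fam_const_def
    using fam_exps[OF assms] by (auto simp: mon_outside)
qed

lemma eval_fam:
  assumes "2 \<le> n" "2 \<le> d"
  shows "eval_form n d (fam n d s) x =
     (s * x 0 + x 1)^2 * (x 0 ^ (d-2) + x 1 ^ (d-2)) + (\<Sum>k\<in>{2..<n}. x k ^ d)"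
proof -
  obtain m where m: "d = m + 2" using assms(2) by (metis add.commute le_Suc_ex)
  have powers: "(\<Sum>k\<in>{2..<n}. eval_form n d (mon (exi d k)) x) = (\<Sum>k\<in>{2..<n}. x k ^ d)"
    by (rule sum.cong) (auto simp: eval_mon exi_mem xp_exi)
  have "eval_form n d (fam n d s) x = s^2 * (x 0 ^ d + x 0 ^ 2 * x 1 ^ (d-2))
      + s * (2 * (x 0 ^ (d-1) * x 1) + 2 * (x 0 * x 1 ^ (d-1)))
      + (x 0 ^ (d-2) * x 1 ^ 2 + x 1 ^ d + (\<Sum>k\<in>{2..<n}. x k ^ d))"
    unfolding fam_def fam_quad_def fam_lin_def fam_const_def
    by (simp only: eval_add eval_scale eval_sum eval_mon fam_exps[OF assms] powers xp_ex2 assms(1)) simp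
  also have "\<dots> = (s * x 0 + x 1)^2 * (x 0 ^ (d-2) + x 1 ^ (d-2)) + (\<Sum>k\<in>{2..<n}. x k ^ d)"
    unfolding m by (simp add: power2_eq_square algebra_simps)
  finally show ?thesis .
qed

lemma fam_copos:
  assumes "2 \<le> n" "2 \<le> d"
  shows "fam n d s \<in> copos n d"
proof -
  have "0 \<le> eval_form n d (fam n d s) x" if "\<forall>i<n. 0 \<le> x i" for x
    unfolding eval_fam[OF assms] using that assms(1)
    by (intro add_nonneg_nonneg mult_nonneg_nonneg sum_nonneg) auto
  then show ?thesis unfolding copos_def using fam_forms[OF assms] by auto
qed

text \<open>f_1 dominates the power sum, since x_i^d \<le> (x_0 + x_1)^2 x_i^(d-2) for i = 0, 1.\<close>
lemma fam_one_interior: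
  assumes "2 \<le> n" "2 \<le> d"
  shows "fam n d 1 \<in> form_interior n d (copos n d)"
proof (rule dominating_power_sum_interior)
  fix x :: "nat \<Rightarrow> real" assume x: "\<forall>i<n. 0 \<le> x i"
  obtain m where m: "d = m + 2" using assms(2) by (metis add.commute le_Suc_ex)
  have x01: "0 \<le> x 0" "0 \<le> x 1" using x assms(1) by auto
  have bound: "x i ^ d \<le> (x 0 + x 1)^2 * x i ^ (d-2)" if "i = 0 \<or> i = 1" for i
  proof -
    have "x i ^ 2 \<le> (x 0 + x 1)^2" using x01 that by (intro power_mono) auto
    then have "x i ^ 2 * x i ^ (d-2) \<le> (x 0 + x 1)^2 * x i ^ (d-2)"
      using x01 that by (intro mult_right_mono) auto
    then show ?thesis unfolding m by (simp add: power_add power2_eq_square mult.assoc)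
  qed
  have "{..<n} = {0,1} \<union> {2..<n}" using assms(1) by auto
  then have "(\<Sum>i<n. x i ^ d) = x 0 ^ d + x 1 ^ d + (\<Sum>k\<in>{2..<n}. x k ^ d)"
    by (simp add: sum.union_disjoint)
  also have "\<dots> \<le> eval_form n d (fam n d 1) x"
    unfolding eval_fam[OF assms] using bound[of 0] bound[of 1] by (simp add: distrib_left)
  finally show "(\<Sum>i<n. x i ^ d) \<le> eval_form n d (fam n d 1) x" .
qed (use assms fam_forms[OF assms] in simp_all)

text \<open>For s < 0, f_s vanishes at (1, -s, 0, ..., 0), where x_0^d = 1.\<close>
lemma fam_negative_rigid:
  assumes "2 \<le> n" "2 \<le> d" "s < 0" "e > 0"
  shows "(\<lambda>\<alpha>. fam n d s \<alpha> - e * mon (exi d 0) \<alpha>) \<notin> copos n d"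
proof (rule zero_in_orthant_rigid)
  define x where "x = (\<lambda>i::nat. if i = 0 then 1 else if i = 1 then - s else 0::real)"
  show "\<forall>i<n. 0 \<le> x i" unfolding x_def using assms by auto
  show "eval_form n d (fam n d s) x = 0" unfolding eval_fam[OF assms(1,2)] x_def using assms by simp
  show "0 < xp n (exi d 0) x" using assms by (simp add: xp_exi x_def)
qed (use assms exi_mem in auto)


lemma no_polynomial_defining_function:
  assumes "2 \<le> d" "2 \<le> n" "poly_in_coeffs n d \<phi>"
    and interior: "\<forall>f\<in>form_interior n d (copos n d). 0 < \<phi> f"
    and boundary: "\<forall>f\<in>form_boundary n d (copos n d). \<phi> f = 0"
  shows False
proof -
  obtain Q where Q: "\<And>s. \<phi> (fam n d s) = poly Q s"
    using poly_in_coeffs_along_curve[where c="fam n d" and P="fam_coeff_poly n d", OF assms(3) fam_poly]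
    by blast
  have "fam n d s \<in> form_boundary n d (copos n d)" if "s < 0" for s
    using assms(1,2) that
    by (intro rigid_imp_boundary[where \<beta>="exi d 0"] fam_copos exi_mem fam_negative_rigid) auto
  then have "Q = 0" using boundary Q by (intro poly_vanishing_on_negatives) (metis)
  then show False using interior fam_one_interior[OF assms(2,1)] Q[of 1] by auto
qed

lemma no_lmi_representation:
  fixes L :: "((nat \<Rightarrow> nat) \<Rightarrow> real) \<Rightarrow> real^'m^'m"
  assumes "2 \<le> d" "2 \<le> n" "sym_pencil n d L" "copos n d = {f \<in> forms n d. psd (L f)}"
    and interior: "\<forall>f\<in>form_interior n d (copos n d). pd (L f)"
  shows False
proof -
  obtain Q where Q: "\<And>s. det (L (fam n d s)) = poly Q s"
    using pencil_along_curve[where c="fam n d" and P="fam_coeff_poly n d", OF assms(3) fam_poly]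
    by blast
  have "det (L (fam n d s)) = 0" if "s < 0" for s
    using assms(1,2) that
    by (intro lmi_singular_at_rigid[OF assms(3,4), where \<beta>="exi d 0"] fam_copos exi_mem
        fam_negative_rigid) auto
  then have "Q = 0" using Q by (intro poly_vanishing_on_negatives) auto
  then show False using interior fam_one_interior[OF assms(2,1)] pd_imp_nonsingular Q[of 1] by auto
qed

theorem mainTheorem17:
  fixes n d :: nat
  assumes "2 \<le> d" and "2 \<le> n"
  shows "\<not> (\<exists>\<phi>. poly_in_coeffs n d \<phi> \<and>
              (\<forall>f\<in>form_interior n d (copos n d). 0 < \<phi> f) \<and>
              (\<forall>f\<in>form_boundary n d (copos n d). \<phi> f = 0))
         \<and> \<not> (\<exists>L :: ((nat \<Rightarrow> nat) \<Rightarrow> real) \<Rightarrow> real^'m^'m.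
              sym_pencil n d L \<and>
              copos n d = {f \<in> forms n d. psd (L f)} \<and>
              (\<forall>f\<in>form_interior n d (copos n d). pd (L f)))"
  using no_polynomial_defining_function[OF assms] no_lmi_representation[OF assms] by blast

end
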